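(* Consider the zooming algorithm on an instance of the Lipschitz MAB problem. In a clean phase, for any two distinct strategies $u,v$ that are active at some time $t$ of the phase, $L(u,v)>\tfrac14\min(\Delta(u),\Delta(v))$.
   Context: Lipschitz MAB problem on $(L,X)$ of diameter $\le1$: unknown $\mu:X\to[0,1]$ with $|\mu(x)-\mu(y)|\le L(x,y)$; playing $v$ yields an independent sample in $[0,1]$ of mean $\mu(v)$. $\mu^*=\sup_X\mu$, $\Delta(v)=\mu^*-\mu(v)$. Zooming algorithm: phases $i=1,2,\dots$ of $2^i$ rounds; within phase $i$, $n_t(v)$ = number of plays of $v$ in this phase before round $t$, $\mu_t(v)$ = their average reward ($0$ if none), $r_t(v)=\sqrt{8i/(2+n_t(v))}$, $I_t(v)=\mu_t(v)+2r_t(v)$; at phase start nothing is active; $u$ is covered at $t$ if $u\in B(v,r_t(v))$ (open ball) for some active $v$; in each round, if some strategy is uncovered one such is activated, then an active strategy of maximal index is played. Phase $i$ is clean if $|\mu_t(v)-\mu(v)|\le r_t(v)$ for every strategy $v$ played at least once in the phase and every round $t$ of the phase. *)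

theory Defs
  imports Complex_Main
begin

definition lipschitz_mab ::
  "'a set \<Rightarrow> ('a \<Rightarrow> 'a \<Rightarrow> real) \<Rightarrow> ('a \<Rightarrow> real) \<Rightarrow> bool" where
  "lipschitz_mab X L mu \<longleftrightarrow>
     X \<noteq> {} \<and>
     (\<forall>x\<in>X. \<forall>y\<in>X. 0 \<le> L x y \<and> L x y \<le> 1 \<and> (L x y = 0 \<longleftrightarrow> x = y) \<and> L x y = L y x) \<and>
     (\<forall>x\<in>X. \<forall>y\<in>X. \<forall>z\<in>X. L x z \<le> L x y + L y z) \<and>
     (\<forall>x\<in>X. 0 \<le> mu x \<and> mu x \<le> 1) \<and>
     (\<forall>x\<in>X. \<forall>y\<in>X. \<bar>mu x - mu y\<bar> \<le> L x y)"

definition mu_star :: "'a set \<Rightarrow> ('a \<Rightarrow> real) \<Rightarrow> real" where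
  "mu_star X mu = Sup (mu ` X)"

definition Delta :: "'a set \<Rightarrow> ('a \<Rightarrow> real) \<Rightarrow> 'a \<Rightarrow> real" where
  "Delta X mu v = mu_star X mu - mu v"

text \<open>A run of phase i is described by: act t (strategy activated in round t, if any),
  play t (strategy played in round t), rew t (reward observed in round t);
  rounds of the phase are t = 0, ..., 2^i - 1 (phase-local time).\<close>

definition n_cnt :: "(nat \<Rightarrow> 'a) \<Rightarrow> nat \<Rightarrow> 'a \<Rightarrow> nat" where
  "n_cnt play t v = card {s. s < t \<and> play s = v}"

definition avg_rew :: "(nat \<Rightarrow> 'a) \<Rightarrow> (nat \<Rightarrow> real) \<Rightarrow> nat \<Rightarrow> 'a \<Rightarrow> real" where
  "avg_rew play rew t v =
     (if n_cnt play t v = 0 then 0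
      else (\<Sum>s\<in>{s. s < t \<and> play s = v}. rew s) / real (n_cnt play t v))"

definition rad :: "nat \<Rightarrow> (nat \<Rightarrow> 'a) \<Rightarrow> nat \<Rightarrow> 'a \<Rightarrow> real" where
  "rad i play t v = sqrt (8 * real i / (2 + real (n_cnt play t v)))"

definition idx :: "nat \<Rightarrow> (nat \<Rightarrow> 'a) \<Rightarrow> (nat \<Rightarrow> real) \<Rightarrow> nat \<Rightarrow> 'a \<Rightarrow> real" where
  "idx i play rew t v = avg_rew play rew t v + 2 * rad i play t v"

definition active_before :: "(nat \<Rightarrow> 'a option) \<Rightarrow> nat \<Rightarrow> 'a set" where
  "active_before act t = {u. \<exists>s<t. act s = Some u}"

definition active_at :: "(nat \<Rightarrow> 'a option) \<Rightarrow> nat \<Rightarrow> 'a set" where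
  "active_at act t = active_before act t \<union> set_option (act t)"

definition covered ::
  "('a \<Rightarrow> 'a \<Rightarrow> real) \<Rightarrow> nat \<Rightarrow> (nat \<Rightarrow> 'a option) \<Rightarrow> (nat \<Rightarrow> 'a) \<Rightarrow> nat \<Rightarrow> 'a \<Rightarrow> bool" where
  "covered L i act play t u \<longleftrightarrow> (\<exists>v\<in>active_before act t. L v u < rad i play t v)"

definition zooming_phase ::
  "'a set \<Rightarrow> ('a \<Rightarrow> 'a \<Rightarrow> real) \<Rightarrow> nat \<Rightarrow> (nat \<Rightarrow> 'a option) \<Rightarrow> (nat \<Rightarrow> 'a) \<Rightarrow> (nat \<Rightarrow> real) \<Rightarrow> bool"
  where
  "zooming_phase X L i act play rew \<longleftrightarrow>
     (\<forall>t < 2 ^ i.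
        0 \<le> rew t \<and> rew t \<le> 1 \<and>
        (if (\<exists>u\<in>X. \<not> covered L i act play t u)
         then (\<exists>u. act t = Some u \<and> u \<in> X \<and> \<not> covered L i act play t u)
         else act t = None) \<and>
        play t \<in> active_at act t \<and>
        (\<forall>w\<in>active_at act t. idx i play rew t w \<le> idx i play rew t (play t)))"

definition clean_phase ::
  "('a \<Rightarrow> real) \<Rightarrow> nat \<Rightarrow> (nat \<Rightarrow> 'a) \<Rightarrow> (nat \<Rightarrow> real) \<Rightarrow> bool" where
  "clean_phase mu i play rew \<longleftrightarrow>
     (\<forall>v. (\<exists>s < 2 ^ i. play s = v) \<longrightarrow>
        (\<forall>t < 2 ^ i. \<bar>avg_rew play rew t v - mu v\<bar> \<le> rad i play t v))"

end

theory Submission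
  imports Defs
begin

(* Write r_t(w) for the confidence radius and I_t(w) for the index.
   (1) Optimism: every active arm w satisfies mu(w) + r_t(w) <= I_t(w), and every
       played arm u satisfies I_t(u) <= mu(u) + 3 r_t(u); both come from cleanness,
       or from r_t(w) >= 2 for an arm not yet played.
   (2) If u is played in round s, then Delta(u) <= 3 r_s(u): either a fresh arm of
       index >= 4 is activated in round s, which forces r_s(u) >= 1, or every arm x
       is covered by an active w, so mu(x) < mu(w) + r_s(w) <= I_s(w) <= I_s(u).
   (3) Hence an arm u activated before round t satisfies Delta(u) < 4 r_t(u): look
       at the last round s < t in which u was played; one more play shrinks the
       radius by less than the factor 3/4.
   (4) If v is activated after u, then v is not covered, so L(u,v) >= r(u) > Delta(u)/4.
   The file develops the facts about instances, radii and phase runs first, then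
   (1)-(4), and derives the theorem by applying (4) to whichever arm came first. *)

lemma lipschitz_mabD:
  assumes "lipschitz_mab X L mu"
  shows "X \<noteq> {}"
    and "\<And>x. x \<in> X \<Longrightarrow> 0 \<le> mu x" and "\<And>x. x \<in> X \<Longrightarrow> mu x \<le> 1"
    and "\<And>x y. x \<in> X \<Longrightarrow> y \<in> X \<Longrightarrow> \<bar>mu x - mu y\<bar> \<le> L x y"
    and "\<And>x. x \<in> X \<Longrightarrow> L x x = 0"
    and "\<And>x y. x \<in> X \<Longrightarrow> y \<in> X \<Longrightarrow> L x y = L y x"
  using assms unfolding lipschitz_mab_def by blast+

lemma mu_le_mu_star:
  assumes "lipschitz_mab X L mu" "x \<in> X"
  shows "mu x \<le> mu_star X mu"
proof -
  have "bdd_above (mu ` X)"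
    using lipschitz_mabD(3)[OF assms(1)] unfolding bdd_above_def by blast
  then show ?thesis unfolding mu_star_def using assms(2) by (simp add: cSup_upper)
qed

lemma mu_star_le_1:
  assumes "lipschitz_mab X L mu"
  shows "mu_star X mu \<le> 1"
  unfolding mu_star_def using lipschitz_mabD(1,3)[OF assms] by (intro cSup_least) auto

lemma Delta_le_1:
  assumes "lipschitz_mab X L mu" "x \<in> X"
  shows "Delta X mu x \<le> 1"
  unfolding Delta_def using mu_star_le_1[OF assms(1)] lipschitz_mabD(2)[OF assms] by linarith

lemma rad_pos: "1 \<le> i \<Longrightarrow> 0 < rad i play t v"
  unfolding rad_def by (intro real_sqrt_gt_zero divide_pos_pos) auto

text \<open>An arm not yet played has radius sqrt(4i) >= 2, hence index >= 4.\<close>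
lemma rad_unplayed:
  assumes "1 \<le> i" "n_cnt play t v = 0"
  shows "2 \<le> rad i play t v"
proof -
  have "rad i play t v = sqrt (4 * real i)" using assms(2) unfolding rad_def by simp
  moreover have "2 \<le> sqrt (4 * real i)" using assms(1) by (intro real_le_rsqrt) simp
  ultimately show ?thesis by simp
qed

text \<open>One additional play shrinks the radius by a factor larger than 3/4:
  9/(2+n) < 16/(3+n) for all n >= 0.\<close>
lemma sqrt_radius_step:
  fixes n c :: real
  assumes "0 \<le> n" "0 < c"
  shows "3 * sqrt (c / (2 + n)) < 4 * sqrt (c / (3 + n))"
proof -
  \<comment> \<open>after clearing denominators: 27 c + 9 c n < 32 c + 16 c n\<close>
  have "0 < c * 5 + c * (n * 7)" using assms by (simp add: add_pos_nonneg)
  then have "9 * (c / (2 + n)) < 16 * (c / (3 + n))"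
    using assms by (simp add: field_simps)
  then have less: "sqrt (9 * (c / (2 + n))) < sqrt (16 * (c / (3 + n)))"
    by (rule real_sqrt_less_mono)
  have "sqrt (9 * a) = 3 * sqrt a" "sqrt (16 * a) = 4 * sqrt a" for a :: real
  proof -
    have "sqrt 9 = (3::real)" "sqrt 16 = (4::real)" by (rule real_sqrt_unique; simp)+
    then show "sqrt (9 * a) = 3 * sqrt a" "sqrt (16 * a) = 4 * sqrt a"
      by (simp_all only: real_sqrt_mult)
  qed
  then show ?thesis using less by (simp only:)
qed

lemma rad_step:
  assumes "1 \<le> i" "n_cnt play t u = n_cnt play s u + 1"
  shows "3 * rad i play s u < 4 * rad i play t u"
  using sqrt_radius_step[of "real (n_cnt play s u)" "8 * real i"] assms
  unfolding rad_def by (simp add: add.commute add.left_commute)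

lemma n_cnt_last_play:
  assumes "n_cnt play t u \<noteq> 0"
  obtains s where "s < t" "play s = u" "n_cnt play t u = n_cnt play s u + 1"
proof -
  define S where "S = {s. s < t \<and> play s = u}"
  have "finite S" "S \<noteq> {}" using assms unfolding n_cnt_def S_def by auto
  define s where "s = Max S"
  have s: "s < t" "play s = u"
    using Max_in[OF \<open>finite S\<close> \<open>S \<noteq> {}\<close>] unfolding s_def S_def by auto
  have "S = insert s {s'. s' < s \<and> play s' = u}"
    using s Max_ge[OF \<open>finite S\<close>] unfolding s_def[symmetric] unfolding S_def
    by (auto simp: order.strict_iff_order)
  then have "card S = n_cnt play s u + 1" unfolding n_cnt_def by simp
  then show ?thesis using that s unfolding n_cnt_def S_def by simp
qed

lemma zooming_phaseD:
  assumes "zooming_phase X L i act play rew" "t < 2 ^ i"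
  shows "(\<exists>u\<in>X. \<not> covered L i act play t u) \<Longrightarrow>
           \<exists>u. act t = Some u \<and> u \<in> X \<and> \<not> covered L i act play t u"
    and "\<not> (\<exists>u\<in>X. \<not> covered L i act play t u) \<Longrightarrow> act t = None"
    and "play t \<in> active_at act t"
    and "\<And>w. w \<in> active_at act t \<Longrightarrow> idx i play rew t w \<le> idx i play rew t (play t)"
  using assms unfolding zooming_phase_def by (auto split: if_splits)

lemma activated_uncovered:
  assumes "zooming_phase X L i act play rew" "s < 2 ^ i" "act s = Some a"
  shows "a \<in> X" "\<not> covered L i act play s a"
  using zooming_phaseD(1,2)[OF assms(1,2)] assms(3)
  by (cases "\<exists>u\<in>X. \<not> covered L i act play s u"; auto)+

lemma active_before_in_X:
  assumes "zooming_phase X L i act play rew" "t < 2 ^ i" "w \<in> active_before act t"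
  shows "w \<in> X"
  using assms(2,3) activated_uncovered(1)[OF assms(1)] unfolding active_before_def
  by (auto dest: order.strict_trans)

text \<open>Only active arms are played, so an arm not active before s has not been played.\<close>
lemma n_cnt_not_active:
  assumes "zooming_phase X L i act play rew" "s < 2 ^ i" "a \<notin> active_before act s"
  shows "n_cnt play s a = 0"
proof -
  have "play s' \<noteq> a" if "s' < s" for s'
  proof
    assume "play s' = a"
    then have "a \<in> active_at act s'" using zooming_phaseD(3)[OF assms(1)] that assms(2) by auto
    then have "a \<in> active_before act s"
      using that unfolding active_at_def active_before_def by (auto dest: order.strict_trans)
    then show False using assms(3) by blast
  qed
  then show ?thesis unfolding n_cnt_def by simp
qed

text \<open>An arm activated in round s is fresh: it was not active (it would cover itself)
  and hence never played before s.\<close>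
lemma activated_unplayed:
  assumes "lipschitz_mab X L mu" "1 \<le> i" "zooming_phase X L i act play rew"
    "s < 2 ^ i" "act s = Some a"
  shows "n_cnt play s a = 0"
proof -
  have "a \<notin> active_before act s"
    using activated_uncovered[OF assms(3-5)] lipschitz_mabD(5)[OF assms(1)] rad_pos[OF assms(2)]
    unfolding covered_def by fastforce
  then show ?thesis using n_cnt_not_active[OF assms(3,4)] by blast
qed

lemma idx_upper:
  assumes "clean_phase mu i play rew" "s < 2 ^ i" "play s = u"
  shows "idx i play rew s u \<le> mu u + 3 * rad i play s u"
proof -
  have "\<bar>avg_rew play rew s u - mu u\<bar> \<le> rad i play s u"
    using assms unfolding clean_phase_def by blast
  then show ?thesis unfolding idx_def by linarith
qed

lemma idx_lower:
  assumes "lipschitz_mab X L mu" "1 \<le> i" "clean_phase mu i play rew" "s < 2 ^ i" "w \<in> X"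
  shows "mu w + rad i play s w \<le> idx i play rew s w"
proof (cases "n_cnt play s w = 0")
  case True
  then show ?thesis
    using rad_unplayed[OF assms(2) True] lipschitz_mabD(3)[OF assms(1,5)]
    unfolding idx_def avg_rew_def by simp
next
  case False
  then obtain s' where "s' < s" "play s' = w" by (rule n_cnt_last_play)
  then have "\<bar>avg_rew play rew s w - mu w\<bar> \<le> rad i play s w"
    using assms(3,4) order.strict_trans[OF \<open>s' < s\<close> assms(4)]
    unfolding clean_phase_def by blast
  then show ?thesis unfolding idx_def by linarith
qed

lemma Delta_played:
  assumes mab: "lipschitz_mab X L mu" and i: "1 \<le> i"
    and z: "zooming_phase X L i act play rew" and c: "clean_phase mu i play rew"
    and s: "s < 2 ^ i" and u: "play s = u" "u \<in> X"
  shows "Delta X mu u \<le> 3 * rad i play s u"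
proof -
  have best: "idx i play rew s w \<le> mu u + 3 * rad i play s u" if "w \<in> active_at act s" for w
    using zooming_phaseD(4)[OF z s that] idx_upper[OF c s u(1)] u(1) by simp
  show ?thesis
  proof (cases "\<exists>x\<in>X. \<not> covered L i act play s x")
    case True
    then obtain a where a: "act s = Some a" using zooming_phaseD(1)[OF z s] by blast
    have "4 \<le> idx i play rew s a"
      using activated_unplayed[OF mab i z s a] rad_unplayed[OF i]
      unfolding idx_def avg_rew_def by simp
    moreover have "a \<in> active_at act s" using a unfolding active_at_def by simp
    ultimately have "4 \<le> mu u + 3 * rad i play s u" using best by fastforce
    then show ?thesis using lipschitz_mabD(3)[OF mab u(2)] Delta_le_1[OF mab u(2)] by linarith
  next
    case False
    have "mu x \<le> mu u + 3 * rad i play s u" if x: "x \<in> X" for x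
    proof -
      obtain w where w: "w \<in> active_before act s" "L w x < rad i play s w"
        using False x unfolding covered_def by blast
      have wX: "w \<in> X" using active_before_in_X[OF z s w(1)] .
      have "mu x \<le> mu w + L w x" using lipschitz_mabD(4)[OF mab wX x] by linarith
      also have "\<dots> < mu w + rad i play s w" using w(2) by simp
      also have "\<dots> \<le> idx i play rew s w" using idx_lower[OF mab i c s wX] .
      also have "\<dots> \<le> mu u + 3 * rad i play s u"
        using best w(1) unfolding active_at_def by simp
      finally show ?thesis by simp
    qed
    then have "mu_star X mu \<le> mu u + 3 * rad i play s u"
      unfolding mu_star_def using lipschitz_mabD(1)[OF mab] by (intro cSup_least) auto
    then show ?thesis unfolding Delta_def by simp
  qed
qed

lemma Delta_active:
  assumes mab: "lipschitz_mab X L mu" and i: "1 \<le> i"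
    and z: "zooming_phase X L i act play rew" and c: "clean_phase mu i play rew"
    and t: "t < 2 ^ i" and u: "u \<in> active_before act t"
  shows "Delta X mu u < 4 * rad i play t u"
proof -
  have uX: "u \<in> X" using active_before_in_X[OF z t u] .
  show ?thesis
  proof (cases "n_cnt play t u = 0")
    case True
    then show ?thesis using rad_unplayed[OF i True] Delta_le_1[OF mab uX] by linarith
  next
    case False
    then obtain s where s: "s < t" "play s = u" "n_cnt play t u = n_cnt play s u + 1"
      by (rule n_cnt_last_play)
    have "Delta X mu u \<le> 3 * rad i play s u"
      using Delta_played[OF mab i z c _ s(2) uX] s(1) t by simp
    also have "\<dots> < 4 * rad i play t u" using rad_step[OF i s(3)] .
    finally show ?thesis .
  qed
qed

text \<open>When v is activated after u, v lies outside the ball of u, which is wide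
  compared to the gap of u.\<close>
lemma Delta_earlier_arm:
  assumes mab: "lipschitz_mab X L mu" and i: "1 \<le> i"
    and z: "zooming_phase X L i act play rew" and c: "clean_phase mu i play rew"
    and su: "act su = Some u" and sv: "act sv = Some v" "su < sv" "sv < 2 ^ i"
  shows "Delta X mu u < 4 * L u v"
proof -
  have u: "u \<in> active_before act sv" using su sv(2) unfolding active_before_def by auto
  have "rad i play sv u \<le> L u v"
    using activated_uncovered(2)[OF z sv(3,1)] u unfolding covered_def by (meson not_less)
  then show ?thesis using Delta_active[OF mab i z c sv(3) u] by linarith
qed

theorem mainTheorem10:
  fixes X :: "'a set" and L :: "'a \<Rightarrow> 'a \<Rightarrow> real" and mu :: "'a \<Rightarrow> real"
    and i :: nat and act :: "nat \<Rightarrow> 'a option" and play :: "nat \<Rightarrow> 'a"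
    and rew :: "nat \<Rightarrow> real" and t :: nat and u v :: 'a
  assumes "lipschitz_mab X L mu"
    and "1 \<le> i"
    and "zooming_phase X L i act play rew"
    and "clean_phase mu i play rew"
    and "t < 2 ^ i"
    and "u \<in> active_at act t" and "v \<in> active_at act t" and "u \<noteq> v"
  shows "L u v > 1/4 * min (Delta X mu u) (Delta X mu v)"
proof -
  note phase = assms(1-4)
  obtain su where su: "su \<le> t" "act su = Some u"
    using assms(6) unfolding active_at_def active_before_def by (auto intro: less_imp_le)
  obtain sv where sv: "sv \<le> t" "act sv = Some v"
    using assms(7) unfolding active_at_def active_before_def by (auto intro: less_imp_le)
  have "L v u = L u v"
    using lipschitz_mabD(6)[OF assms(1)] activated_uncovered(1)[OF assms(3)] su sv assms(5)
    by (meson le_less_trans)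
  moreover have "su \<noteq> sv" using su sv assms(8) by auto
  then consider "su < sv" | "sv < su" by linarith
  then have "Delta X mu u < 4 * L u v \<or> Delta X mu v < 4 * L v u"
    using Delta_earlier_arm[OF phase su(2) sv(2)] Delta_earlier_arm[OF phase sv(2) su(2)]
      su(1) sv(1) assms(5) by (cases; fastforce)
  ultimately show ?thesis by linarith
qed

end
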